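(* Let $M,N$ be finitary matroids on $E$, $b=(B_M,B_N)$ with $B_M$ a base of $M$ and $B_N$ a base of $N$. Let $\mathcal{P}=\langle P_\alpha:\alpha<\xi\rangle$ be a transfinite sequence of finite directed paths without shortcuts in $D(b)$ such that for every $\beta<\alpha<\xi$ the path $P_\alpha$ is disjoint from all escorting circuits (w.r.t. $b$) of the arcs of $P_\beta$. Let $A(\mathcal{P}):=\bigcup_{\alpha<\xi}A(P_\alpha)$, let $B_M^\xi$ be obtained from $B_M$ by adding the tails and deleting the heads of the arcs in $A(\mathcal{P})\cap D_M(B_M)$, and let $B_N^\xi$ be obtained from $B_N$ by adding the tails and deleting the heads of the arcs of $D_N(B_N)$ whose reversals lie in $A(\mathcal{P})\cap D_N^{-1}(B_N)$. Then $B_M^\xi$ is a base of $M$ and $B_N^\xi$ is a base of $N$. Furthermore, if $U_{<\xi}$ is the union of the escorting circuits of the arcs of all $P_\alpha$, $\alpha<\xi$, then $D_M(B_M^\xi)[E\setminus U_{<\xi}]=D_M(B_M)[E\setminus U_{<\xi}]$ and $D_N(B_N^\xi)[E\setminus U_{<\xi}]=D_N(B_N)[E\setminus U_{<\xi}]$.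
   Context: For a base $B$ of a matroid $M$ on $E$, $D_M(B)$ is the digraph on $E$ with $ef\in D_M(B)$ iff $e\in E\setminus B$ and $f\in C_M(e,B)\setminus\{e\}$ ($C_M(e,B)$ the fundamental circuit of $e$ on $B$). $D^{-1}$ reverses all arcs; $D(b):=D_M(B_M)\cup D_N^{-1}(B_N)$. Escorting circuits of an arc $ef\in D(b)$: $C_M(e,B_M)$ if $ef\in D_M(B_M)$, and $C_N(f,B_N)$ if $ef\in D_N^{-1}(B_N)$. A path is a finite directed path; $A(P)$ denotes its arc set. A shortcut of $P$ is an arc $ef\in D(b)$ with $e,f$ on $P$, $f$ later than $e$ on $P$, and $ef\notin A(P)$. $D[X]$ denotes the subdigraph induced on $X$. *)

theory Defs
  imports Main
begin

text \<open>A matroid on ground set E is given by its independence predicate (axioms of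
Bruhn, Diestel, Kriesell, Pendavingh, Wollan for possibly infinite matroids).\<close>

definition maximal_in :: "'a set set \<Rightarrow> 'a set \<Rightarrow> bool" where
  "maximal_in S X \<longleftrightarrow> X \<in> S \<and> (\<forall>Y\<in>S. X \<subseteq> Y \<longrightarrow> Y = X)"

definition base :: "'a set \<Rightarrow> ('a set \<Rightarrow> bool) \<Rightarrow> 'a set \<Rightarrow> bool" where
  "base E indep B \<longleftrightarrow> maximal_in {I. I \<subseteq> E \<and> indep I} B"

definition matroid :: "'a set \<Rightarrow> ('a set \<Rightarrow> bool) \<Rightarrow> bool" where
  "matroid E indep \<longleftrightarrow>
     (\<forall>I. indep I \<longrightarrow> I \<subseteq> E) \<and>
     indep {} \<and>
     (\<forall>I J. indep I \<and> J \<subseteq> I \<longrightarrow> indep J) \<and>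
     (\<forall>I I'. indep I \<and> \<not> base E indep I \<and> base E indep I'
          \<longrightarrow> (\<exists>x\<in>I' - I. indep (insert x I))) \<and>
     (\<forall>I X. indep I \<and> I \<subseteq> X \<and> X \<subseteq> E
          \<longrightarrow> (\<exists>J. maximal_in {I'. indep I' \<and> I \<subseteq> I' \<and> I' \<subseteq> X} J))"

definition finitary_matroid :: "'a set \<Rightarrow> ('a set \<Rightarrow> bool) \<Rightarrow> bool" where
  "finitary_matroid E indep \<longleftrightarrow> matroid E indep \<and>
     (\<forall>I \<subseteq> E. (\<forall>F \<subseteq> I. finite F \<longrightarrow> indep F) \<longrightarrow> indep I)"

definition circuit :: "'a set \<Rightarrow> ('a set \<Rightarrow> bool) \<Rightarrow> 'a set \<Rightarrow> bool" where
  "circuit E indep C \<longleftrightarrow> C \<subseteq> E \<and> \<not> indep C \<and> (\<forall>D. D \<subset> C \<longrightarrow> indep D)"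

definition fcirc :: "'a set \<Rightarrow> ('a set \<Rightarrow> bool) \<Rightarrow> 'a \<Rightarrow> 'a set \<Rightarrow> 'a set" where
  "fcirc E indep e B = (THE C. circuit E indep C \<and> C \<subseteq> insert e B)"

definition Dig :: "'a set \<Rightarrow> ('a set \<Rightarrow> bool) \<Rightarrow> 'a set \<Rightarrow> ('a \<times> 'a) set" where
  "Dig E indep B = {(e,f). e \<in> E - B \<and> f \<in> fcirc E indep e B - {e}}"

definition Db :: "'a set \<Rightarrow> ('a set \<Rightarrow> bool) \<Rightarrow> ('a set \<Rightarrow> bool) \<Rightarrow> 'a set \<Rightarrow> 'a set \<Rightarrow> ('a \<times> 'a) set" where
  "Db E M N BM BN = Dig E M BM \<union> (Dig E N BN)\<inverse>"

definition escorts :: "'a set \<Rightarrow> ('a set \<Rightarrow> bool) \<Rightarrow> ('a set \<Rightarrow> bool) \<Rightarrow> 'a set \<Rightarrow> 'a set \<Rightarrow> 'a \<times> 'a \<Rightarrow> 'a set set" where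
  "escorts E M N BM BN a =
     {C. (a \<in> Dig E M BM \<and> C = fcirc E M (fst a) BM) \<or>
         (a \<in> (Dig E N BN)\<inverse> \<and> C = fcirc E N (snd a) BN)}"

definition is_path :: "('a \<times> 'a) set \<Rightarrow> 'a list \<Rightarrow> bool" where
  "is_path D p \<longleftrightarrow> p \<noteq> [] \<and> distinct p \<and> (\<forall>i. Suc i < length p \<longrightarrow> (p ! i, p ! Suc i) \<in> D)"

definition arcs :: "'a list \<Rightarrow> ('a \<times> 'a) set" where
  "arcs p = {(p ! i, p ! Suc i) | i. Suc i < length p}"

definition shortcut :: "('a \<times> 'a) set \<Rightarrow> 'a list \<Rightarrow> 'a \<times> 'a \<Rightarrow> bool" where
  "shortcut D p a \<longleftrightarrow> a \<in> D \<and> a \<notin> arcs p \<and>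
     (\<exists>i j. i < j \<and> j < length p \<and> a = (p ! i, p ! j))"

definition induced :: "('a \<times> 'a) set \<Rightarrow> 'a set \<Rightarrow> ('a \<times> 'a) set" where
  "induced D X = D \<inter> (X \<times> X)"

end

(* The arcs of D_M(B_M) traversed by the paths, ordered lexicographically by (path,
   position), form a triangular family of exchanges (t_k, h_k): h_k lies on the
   fundamental circuit of t_k, but no later head lies on the circuit of an earlier tail --
   across paths because later paths avoid earlier escorting circuits, within a path because
   such a head would give a shortcut.  Performing all exchanges of a triangular family at
   once yields a base: for finitely many exchanges by induction, removing the largest index;
   in general the result is independent because the matroid is finitary, and it spans every
   removed head by well-founded induction along the index order.  A fundamental circuit
   C(e, B) with e and f outside the union U of the circuits C(t_k, B) contains f exactly when
   the corresponding circuit for the new base does, which gives the claim about the induced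
   digraphs.  For N the same argument applies to D_N(B_N) and the reversed paths. *)

theory Submission
  imports Defs "HOL-Library.Product_Lexorder"
begin

definition basis_of :: "('a set \<Rightarrow> bool) \<Rightarrow> 'a set \<Rightarrow> 'a set \<Rightarrow> bool" where
  "basis_of M X I \<longleftrightarrow> I \<subseteq> X \<and> M I \<and> (\<forall>y\<in>X - I. \<not> M (insert y I))"

locale fin_matroid =
  fixes E :: "'a set" and M :: "'a set \<Rightarrow> bool"
  assumes finitary: "finitary_matroid E M"
begin

lemma indep_subset_ground: "M I \<Longrightarrow> I \<subseteq> E"
proof -
  have "\<forall>I. M I \<longrightarrow> I \<subseteq> E"
    using finitary unfolding finitary_matroid_def matroid_def by (elim conjE)
  then show "M I \<Longrightarrow> I \<subseteq> E" by blast
qed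

lemma indep_subset: "M I \<Longrightarrow> J \<subseteq> I \<Longrightarrow> M J"
proof -
  have "\<forall>I J. M I \<and> J \<subseteq> I \<longrightarrow> M J"
    using finitary unfolding finitary_matroid_def matroid_def by (elim conjE)
  then show "M I \<Longrightarrow> J \<subseteq> I \<Longrightarrow> M J" by blast
qed

lemma dependent_superset: "\<not> M D \<Longrightarrow> D \<subseteq> X \<Longrightarrow> \<not> M X"
  using indep_subset by blast

lemma indep_augment: "M I \<Longrightarrow> \<not> base E M I \<Longrightarrow> base E M I' \<Longrightarrow> \<exists>x\<in>I' - I. M (insert x I)"
proof -
  have "\<forall>I I'. M I \<and> \<not> base E M I \<and> base E M I' \<longrightarrow> (\<exists>x\<in>I' - I. M (insert x I))"
    using finitary unfolding finitary_matroid_def matroid_def by (elim conjE)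
  then show "M I \<Longrightarrow> \<not> base E M I \<Longrightarrow> base E M I' \<Longrightarrow> \<exists>x\<in>I' - I. M (insert x I)"
    by blast
qed

lemma indep_maximal_extension:
  "M I \<Longrightarrow> I \<subseteq> X \<Longrightarrow> X \<subseteq> E \<Longrightarrow> \<exists>J. maximal_in {I'. M I' \<and> I \<subseteq> I' \<and> I' \<subseteq> X} J"
proof -
  have "\<forall>I X. M I \<and> I \<subseteq> X \<and> X \<subseteq> E
          \<longrightarrow> (\<exists>J. maximal_in {I'. M I' \<and> I \<subseteq> I' \<and> I' \<subseteq> X} J)"
    using finitary unfolding finitary_matroid_def matroid_def by (elim conjE)
  then show "M I \<Longrightarrow> I \<subseteq> X \<Longrightarrow> X \<subseteq> E
      \<Longrightarrow> \<exists>J. maximal_in {I'. M I' \<and> I \<subseteq> I' \<and> I' \<subseteq> X} J"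
    by blast
qed

lemma indep_if_finite_subsets_indep:
  "I \<subseteq> E \<Longrightarrow> (\<And>F. F \<subseteq> I \<Longrightarrow> finite F \<Longrightarrow> M F) \<Longrightarrow> M I"
proof -
  have "\<forall>I \<subseteq> E. (\<forall>F \<subseteq> I. finite F \<longrightarrow> M F) \<longrightarrow> M I"
    using finitary unfolding finitary_matroid_def by (elim conjE)
  then show "I \<subseteq> E \<Longrightarrow> (\<And>F. F \<subseteq> I \<Longrightarrow> finite F \<Longrightarrow> M F) \<Longrightarrow> M I" by blast
qed

lemma exists_basis_superset:
  assumes "M I" "I \<subseteq> X" "X \<subseteq> E"
  shows "\<exists>J. I \<subseteq> J \<and> basis_of M X J"
proof -
  obtain J where J: "maximal_in {I'. M I' \<and> I \<subseteq> I' \<and> I' \<subseteq> X} J"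
    using indep_maximal_extension[OF assms] by blast
  have "\<not> M (insert y J)" if "y \<in> X - J" for y
    using J that unfolding maximal_in_def by blast
  with J show ?thesis unfolding maximal_in_def basis_of_def by blast
qed

lemma base_iff_basis_of: "base E M B \<longleftrightarrow> basis_of M E B"
proof
  assume "base E M B"
  then show "basis_of M E B"
    unfolding base_def maximal_in_def basis_of_def by blast
next
  assume B: "basis_of M E B"
  have "Y = B" if "M Y" "Y \<subseteq> E" "B \<subseteq> Y" for Y
  proof (rule ccontr)
    assume "Y \<noteq> B"
    then obtain x where "x \<in> Y - B" using \<open>B \<subseteq> Y\<close> by blast
    then show False
      using B that indep_subset[of Y "insert x B"] unfolding basis_of_def by blast
  qed
  with B show "base E M B" unfolding base_def maximal_in_def basis_of_def by blast
qed

lemma base_indep: "base E M B \<Longrightarrow> M B"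
  and base_subset_ground: "base E M B \<Longrightarrow> B \<subseteq> E"
  and base_insert_dependent: "base E M B \<Longrightarrow> x \<in> E - B \<Longrightarrow> \<not> M (insert x B)"
  unfolding base_iff_basis_of basis_of_def by blast+

lemma exists_base_superset: "M I \<Longrightarrow> \<exists>B. base E M B \<and> I \<subseteq> B"
  using exists_basis_superset[of I E] indep_subset_ground base_iff_basis_of by blast

lemma base_of_indep_superset:
  assumes "base E M B" "M B'" "B \<subseteq> B'"
  shows "B' = B"
  using assms indep_subset_ground unfolding base_def maximal_in_def by blast

lemma base_exchange:
  assumes B1: "base E M B1" and B2: "base E M B2" and x: "x \<in> B1 - B2"
  shows "\<exists>y\<in>B2 - B1. base E M (insert y (B1 - {x}))"
proof -
  have indep: "M (B1 - {x})" using base_indep[OF B1] indep_subset by blast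
  have "\<not> base E M (B1 - {x})"
    using base_of_indep_superset[of "B1 - {x}" B1] base_indep[OF B1] x by blast
  then obtain y where y: "y \<in> B2 - (B1 - {x})" "M (insert y (B1 - {x}))"
    using indep_augment[OF indep _ B2] by blast
  have "y \<notin> B1" using x y by auto
  have "base E M (insert y (B1 - {x}))"
  proof (rule ccontr)
    assume "\<not> base E M (insert y (B1 - {x}))"
    then obtain z where "z \<in> B1 - insert y (B1 - {x})" "M (insert z (insert y (B1 - {x})))"
      using indep_augment[OF y(2) _ B1] by blast
    then have "M (insert y B1)" using x by (simp add: insert_absorb insert_commute)
    then show False
      using base_insert_dependent[OF B1] \<open>y \<notin> B1\<close> y base_subset_ground[OF B2] by blast
  qed
  with y \<open>y \<notin> B1\<close> show ?thesis by blast
qed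

lemma card_base_diff_eq:
  assumes "base E M B1" "base E M B2" "finite (B1 - B2)"
  shows "finite (B2 - B1) \<and> card (B2 - B1) = card (B1 - B2)"
  using assms
proof (induction "card (B1 - B2)" arbitrary: B1)
  case 0
  then have "B1 \<subseteq> B2" by auto
  then have "B2 = B1" using base_of_indep_superset 0 base_indep by blast
  then show ?case by simp
next
  case (Suc n)
  then obtain x where x: "x \<in> B1 - B2" by (metis card.empty ex_in_conv nat.distinct(1))
  obtain y where y: "y \<in> B2 - B1" "base E M (insert y (B1 - {x}))"
    using base_exchange[OF Suc.prems(1,2) x] by blast
  let ?B = "insert y (B1 - {x})"
  have "?B - B2 = (B1 - B2) - {x}" using x y by auto
  then have "finite (B2 - ?B) \<and> card (B2 - ?B) = n"
    using Suc.hyps(1)[of ?B] Suc.hyps(2) Suc.prems x y(2) by simp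
  moreover have "B2 - B1 = insert y (B2 - ?B)" "y \<notin> B2 - ?B" using x y by auto
  ultimately show ?case using Suc.hyps(2) by simp
qed

lemma card_indep_le_basis:
  assumes X: "finite X" "X \<subseteq> E" and I: "basis_of M X I" and J: "J \<subseteq> X" "M J"
  shows "card J \<le> card I"
proof -
  obtain BJ where BJ: "base E M BJ" "J \<subseteq> BJ" using exists_base_superset[OF J(2)] by blast
  have I': "M I" "I \<subseteq> X" using I unfolding basis_of_def by auto
  have "I \<union> BJ \<subseteq> E" using I' X base_subset_ground[OF BJ(1)] by blast
  then obtain B2 where B2: "I \<subseteq> B2" "basis_of M (I \<union> BJ) B2"
    using exists_basis_superset[OF I'(1)] by blast
  have "base E M B2"
  proof (rule ccontr)
    assume "\<not> base E M B2"
    moreover have "M B2" using B2(2) unfolding basis_of_def by blast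
    ultimately obtain z where "z \<in> BJ - B2" "M (insert z B2)"
      using indep_augment BJ(1) by blast
    then show False using B2(2) unfolding basis_of_def by blast
  qed
  have fin_I: "finite I" using I' X finite_subset by blast
  have B2_BJ: "B2 - BJ \<subseteq> I - J" using B2(2) BJ(2) unfolding basis_of_def by blast
  then have card_eq: "finite (BJ - B2) \<and> card (BJ - B2) = card (B2 - BJ)"
    using card_base_diff_eq[OF \<open>base E M B2\<close> BJ(1)] fin_I finite_subset by blast
  have "J - I \<subseteq> BJ - B2"
  proof
    fix x assume x: "x \<in> J - I"
    have "x \<notin> B2"
    proof
      assume "x \<in> B2"
      then have "insert x I \<subseteq> B2" using B2(1) by blast
      then have "M (insert x I)" using B2(2) indep_subset unfolding basis_of_def by blast
      then show False using I x J(1) unfolding basis_of_def by blast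
    qed
    then show "x \<in> BJ - B2" using x BJ(2) by blast
  qed
  then have "card (J - I) \<le> card (BJ - B2)" using card_eq card_mono by blast
  also have "\<dots> \<le> card (I - J)" using card_eq B2_BJ fin_I card_mono by (metis finite_Diff)
  finally have "card (J - I) \<le> card (I - J)" .
  moreover have "finite J" using J X finite_subset by blast
  ultimately show ?thesis
    using card_Int_Diff[of J I] card_Int_Diff[OF fin_I, of J] by (simp add: Int_commute)
qed

lemma circuit_dependent: "circuit E M C \<Longrightarrow> \<not> M C"
  and circuit_subset_ground: "circuit E M C \<Longrightarrow> C \<subseteq> E"
  and circuit_psubset_indep: "circuit E M C \<Longrightarrow> D \<subset> C \<Longrightarrow> M D"
  and circuit_minimal: "circuit E M C \<Longrightarrow> x \<in> C \<Longrightarrow> M (C - {x})"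
  unfolding circuit_def by blast+

lemma circuit_finite: "circuit E M C \<Longrightarrow> finite C"
proof (rule ccontr)
  assume C: "circuit E M C" and "infinite C"
  then have "M F" if "F \<subseteq> C" "finite F" for F
    using circuit_psubset_indep[OF C] that by (metis psubsetI)
  then have "M C" using indep_if_finite_subsets_indep circuit_subset_ground[OF C] by blast
  with C show False using circuit_dependent by blast
qed

lemma exists_circuit_subset:
  assumes "X \<subseteq> E" "\<not> M X"
  shows "\<exists>C\<subseteq>X. circuit E M C"
proof -
  obtain F where F: "F \<subseteq> X" "finite F" "\<not> M F"
    using indep_if_finite_subsets_indep assms by blast
  define S where "S G \<longleftrightarrow> G \<subseteq> F \<and> \<not> M G" for G
  define C where "C = arg_min card S"
  have C: "S C" "\<And>G. S G \<Longrightarrow> card C \<le> card G"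
    using arg_min_nat_lemma[of S F card] F unfolding C_def S_def by auto
  have "M D" if "D \<subset> C" for D
  proof -
    have "finite C" using C(1) F(2) finite_subset unfolding S_def by blast
    then have "card D < card C" using that psubset_card_mono by blast
    then have "\<not> S D" using C(2) by fastforce
    then show ?thesis using that C(1) unfolding S_def by blast
  qed
  moreover have "C \<subseteq> X" "\<not> M C" using C(1) F(1) unfolding S_def by auto
  ultimately show ?thesis using assms(1) unfolding circuit_def by blast
qed

text \<open>Transitivity of the span. Restricting Y to the finitely many elements involved
  reduces it to comparing the sizes of two bases of the finite set Y' \<union> W.\<close>
lemma dependent_insert_if_circuit_in_span:
  assumes Y: "M Y" and W: "finite W" "W \<subseteq> E" "\<forall>w\<in>W. \<not> M (insert w Y)"
    and C: "circuit E M C" "x \<in> C" "C \<subseteq> Y \<union> W \<union> {x}" and "x \<notin> Y"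
  shows "\<not> M (insert x Y)"
proof
  assume Mx: "M (insert x Y)"
  have "\<exists>D. circuit E M D \<and> D \<subseteq> insert w Y" if "w \<in> W" for w
  proof -
    have "insert w Y \<subseteq> E" using that W(2) indep_subset_ground[OF Y] by blast
    then show ?thesis using exists_circuit_subset W(3) that by blast
  qed
  then obtain D where D: "\<And>w. w \<in> W \<Longrightarrow> circuit E M (D w) \<and> D w \<subseteq> insert w Y"
    by metis
  define Y' where "Y' = Y \<inter> (C \<union> \<Union>(D ` W))"
  have "finite (C \<union> \<Union>(D ` W))" using D W(1) circuit_finite C(1) by blast
  then have "finite Y'" unfolding Y'_def by blast
  have "Y' \<subseteq> Y" unfolding Y'_def by blast
  then have "M Y'" using indep_subset[OF Y] by blast
  let ?X = "Y' \<union> W"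
  have X: "finite ?X" "?X \<subseteq> E"
    using \<open>finite Y'\<close> W(1,2) indep_subset_ground[OF Y] \<open>Y' \<subseteq> Y\<close> by auto
  have "\<not> M (insert w Y')" if "w \<in> W" for w
  proof -
    have "D w \<subseteq> insert w Y'" using D[OF that] that unfolding Y'_def by blast
    then show ?thesis using D[OF that] circuit_dependent dependent_superset by blast
  qed
  then have "basis_of M ?X Y'" using \<open>M Y'\<close> unfolding basis_of_def by blast
  have "M (C - {x})" using circuit_minimal C(1,2) by blast
  moreover have "C - {x} \<subseteq> ?X" using C(3) unfolding Y'_def by blast
  ultimately obtain K where K: "C - {x} \<subseteq> K" "basis_of M ?X K"
    using exists_basis_superset[OF _ _ X(2)] by blast
  have "K \<subseteq> ?X" "M K" using K(2) unfolding basis_of_def by blast+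
  then have "card K \<le> card Y'" using card_indep_le_basis[OF X \<open>basis_of M ?X Y'\<close>] by blast
  have "C \<subseteq> insert x K" using K(1) by blast
  then have "\<not> M (insert x K)" using C(1) circuit_dependent dependent_superset by blast
  then have "basis_of M (insert x ?X) K" using K(2) unfolding basis_of_def by auto
  moreover have "M (insert x Y')" using indep_subset[OF Mx] \<open>Y' \<subseteq> Y\<close> by blast
  moreover have "insert x ?X \<subseteq> E" using circuit_subset_ground[OF C(1)] C(2) X(2) by blast
  ultimately have "card (insert x Y') \<le> card K"
    using card_indep_le_basis[of "insert x ?X" K "insert x Y'"] X(1) by blast
  moreover have "x \<notin> Y'" using \<open>x \<notin> Y\<close> \<open>Y' \<subseteq> Y\<close> by blast
  ultimately show False using \<open>card K \<le> card Y'\<close> \<open>finite Y'\<close> by simp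
qed

lemma circuit_subset_insert_base:
  assumes B: "base E M B" and C: "circuit E M C" "C \<subseteq> insert e B"
  shows "e \<in> C"
proof (rule ccontr)
  assume "e \<notin> C"
  then have "C \<subseteq> B" using C(2) by blast
  then show False
    using indep_subset[OF base_indep[OF B]] circuit_dependent C(1) by blast
qed

text \<open>Uniqueness of fundamental circuits: two different circuits in B + e would give an
  element f of one of them such that B - f spans both e and f, i.e. all of B.\<close>
lemma circuit_in_insert_base_unique:
  assumes B: "base E M B" and C: "circuit E M C" "C \<subseteq> insert e B"
    and D: "circuit E M D" "D \<subseteq> insert e B"
  shows "C = D"
proof (rule ccontr)
  assume "C \<noteq> D"
  have "\<not> C \<subset> D" using circuit_psubset_indep[OF D(1)] circuit_dependent[OF C(1)] by blast
  with \<open>C \<noteq> D\<close> obtain f where f: "f \<in> C" "f \<notin> D" by blast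
  have e: "e \<in> C" "e \<in> D"
    using circuit_subset_insert_base[OF B C] circuit_subset_insert_base[OF B D] by blast+
  then have "f \<in> B" using f C(2) by blast
  have indep: "M (B - {f})" using indep_subset[OF base_indep[OF B]] by blast
  have "D \<subseteq> insert e (B - {f})" using D(2) f(2) by blast
  then have "\<forall>w\<in>{e}. \<not> M (insert w (B - {f}))"
    using dependent_superset circuit_dependent[OF D(1)] by blast
  moreover have "{e} \<subseteq> E" using circuit_subset_ground[OF C(1)] e(1) by blast
  moreover have "C \<subseteq> (B - {f}) \<union> {e} \<union> {f}" using C(2) by blast
  ultimately have "\<not> M (insert f (B - {f}))"
    using dependent_insert_if_circuit_in_span[OF indep _ _ _ C(1) f(1)] by blast
  then show False using \<open>f \<in> B\<close> base_indep[OF B] by (simp add: insert_absorb)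
qed

lemma fcirc_eqI:
  assumes B: "base E M B" and C: "circuit E M C" "C \<subseteq> insert e B"
  shows "fcirc E M e B = C"
  unfolding fcirc_def
proof (rule the_equality)
  show "circuit E M C \<and> C \<subseteq> insert e B" using C by blast
  show "D = C" if "circuit E M D \<and> D \<subseteq> insert e B" for D
    using circuit_in_insert_base_unique[OF B C] that by blast
qed

lemma
  assumes B: "base E M B" and e: "e \<in> E - B"
  shows fcirc_circuit: "circuit E M (fcirc E M e B)"
    and fcirc_subset: "fcirc E M e B \<subseteq> insert e B"
    and tail_mem_fcirc: "e \<in> fcirc E M e B"
proof -
  have "insert e B \<subseteq> E" using e base_subset_ground[OF B] by blast
  then obtain C where C: "C \<subseteq> insert e B" "circuit E M C"
    using exists_circuit_subset[OF _ base_insert_dependent[OF B e]] by blast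
  then have "fcirc E M e B = C" using fcirc_eqI[OF B] by blast
  then show "circuit E M (fcirc E M e B)" "fcirc E M e B \<subseteq> insert e B"
    and "e \<in> fcirc E M e B" using C circuit_subset_insert_base[OF B C(2,1)] by simp_all
qed

lemma Dig_head_in_base: "base E M B \<Longrightarrow> (e, f) \<in> Dig E M B \<Longrightarrow> f \<in> B"
  using fcirc_subset unfolding Dig_def by blast

lemma Dig_iff:
  "base E M B \<Longrightarrow> (e, f) \<in> Dig E M B \<longleftrightarrow> e \<in> E - B \<and> f \<in> B \<and> f \<in> fcirc E M e B"
  using Dig_head_in_base unfolding Dig_def by blast

lemma base_exchange_Dig:
  assumes B: "base E M B" and ef: "(e, f) \<in> Dig E M B"
  shows "base E M (insert e (B - {f}))"
proof -
  have e: "e \<in> E - B" and f: "f \<in> fcirc E M e B" "f \<noteq> e" using ef unfolding Dig_def by auto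
  have indep: "M (insert e (B - {f}))"
  proof (rule ccontr)
    assume dep: "\<not> M (insert e (B - {f}))"
    have "insert e (B - {f}) \<subseteq> E" using e base_subset_ground[OF B] by blast
    then obtain D where D: "D \<subseteq> insert e (B - {f})" "circuit E M D"
      using exists_circuit_subset[OF _ dep] by blast
    then have "fcirc E M e B = D" using fcirc_eqI[OF B D(2)] by blast
    with D(1) f show False by blast
  qed
  show ?thesis
  proof (rule ccontr)
    assume "\<not> base E M (insert e (B - {f}))"
    then obtain z where "z \<in> B - insert e (B - {f})" "M (insert z (insert e (B - {f})))"
      using indep_augment[OF indep _ B] by blast
    moreover have "f \<in> B" using Dig_head_in_base[OF B ef] .
    ultimately have "M (insert e B)" by (simp add: insert_absorb insert_commute)
    then show False using base_insert_dependent[OF B e] by blast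
  qed
qed

lemma mem_fcirc_iff:
  assumes B: "base E M B" and e: "e \<in> E - B" and f: "f \<in> B"
  shows "f \<in> fcirc E M e B \<longleftrightarrow> M (insert e (B - {f}))"
proof
  assume "f \<in> fcirc E M e B"
  then have "(e, f) \<in> Dig E M B" using e f unfolding Dig_def by blast
  then show "M (insert e (B - {f}))" using base_indep[OF base_exchange_Dig[OF B]] by blast
next
  assume indep: "M (insert e (B - {f}))"
  show "f \<in> fcirc E M e B"
  proof (rule ccontr)
    assume "f \<notin> fcirc E M e B"
    then have "fcirc E M e B \<subseteq> insert e (B - {f})" using fcirc_subset[OF B e] by blast
    then show False using indep_subset[OF indep] circuit_dependent[OF fcirc_circuit[OF B e]] by blast
  qed
qed

lemma fcirc_base_exchange_Dig:
  assumes B: "base E M B" and ef: "(e, f) \<in> Dig E M B" and x: "x \<in> E - B"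
    and "f \<notin> fcirc E M x B"
  shows "fcirc E M x (insert e (B - {f})) = fcirc E M x B"
proof (rule fcirc_eqI[OF base_exchange_Dig[OF B ef] fcirc_circuit[OF B x]])
  show "fcirc E M x B \<subseteq> insert x (insert e (B - {f}))"
    using fcirc_subset[OF B x] assms(4) by blast
qed

end

definition triangular_exchange ::
  "'a set \<Rightarrow> ('a set \<Rightarrow> bool) \<Rightarrow> 'a set \<Rightarrow> 'k::order set \<Rightarrow> ('k \<Rightarrow> 'a) \<Rightarrow> ('k \<Rightarrow> 'a) \<Rightarrow> bool"
where
  "triangular_exchange E M B K t h \<longleftrightarrow>
     (\<forall>k\<in>K. (t k, h k) \<in> Dig E M B) \<and>
     (\<forall>k\<in>K. \<forall>k'\<in>K. k < k' \<longrightarrow> h k' \<notin> fcirc E M (t k) B)"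

definition exchanged :: "'a set \<Rightarrow> 'k set \<Rightarrow> ('k \<Rightarrow> 'a) \<Rightarrow> ('k \<Rightarrow> 'a) \<Rightarrow> 'a set" where
  "exchanged B K t h = (B \<union> t ` K) - h ` K"

lemma triangular_exchange_subset:
  "triangular_exchange E M B K t h \<Longrightarrow> K' \<subseteq> K \<Longrightarrow> triangular_exchange E M B K' t h"
  unfolding triangular_exchange_def by blast

context fin_matroid
begin

lemma triangular_exchange_arc:
  assumes "base E M B" "triangular_exchange E M B K t h" "k \<in> K"
  shows "t k \<in> E - B" "h k \<in> B" "h k \<in> fcirc E M (t k) B"
  using assms Dig_iff[OF assms(1)] unfolding triangular_exchange_def by blast+

lemma triangular_exchange_after_max:
  assumes B: "base E M B" and T: "triangular_exchange E M B (insert m K) t h"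
    and less: "\<forall>k\<in>K. k < m"
  shows "triangular_exchange E M (insert (t m) (B - {h m})) K t h"
proof -
  let ?B = "insert (t m) (B - {h m})"
  have arc: "(t m, h m) \<in> Dig E M B" using T unfolding triangular_exchange_def by blast
  have h_m: "h m \<notin> fcirc E M (t k) B" if "k \<in> K" for k
    using T less that unfolding triangular_exchange_def by blast
  then have same: "fcirc E M (t k) ?B = fcirc E M (t k) B" if "k \<in> K" for k
    using fcirc_base_exchange_Dig[OF B arc] triangular_exchange_arc(1)[OF B T] that by blast
  have "t k \<noteq> t m" if "k \<in> K" for k
    using triangular_exchange_arc(3)[OF B T, of m] h_m that by force
  then have "(t k, h k) \<in> Dig E M ?B" if "k \<in> K" for k
    using T same[OF that] that unfolding triangular_exchange_def Dig_def by auto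
  then show ?thesis using T same unfolding triangular_exchange_def by auto
qed

lemma triangular_exchange_finite_base:
  fixes K :: "'k::linorder set"
  assumes "finite K" "base E M B" "triangular_exchange E M B K t h"
  shows "base E M (exchanged B K t h)"
  using assms
proof (induction K arbitrary: B rule: finite_linorder_max_induct)
  case empty
  then show ?case unfolding exchanged_def by simp
next
  case (insert m K)
  let ?B = "insert (t m) (B - {h m})"
  have "h ` insert m K \<subseteq> B" "t ` insert m K \<inter> B = {}"
    using triangular_exchange_arc(1,2)[OF insert.prems] by blast+
  then have eq: "exchanged ?B K t h = exchanged B (insert m K) t h"
    unfolding exchanged_def by blast
  have "(t m, h m) \<in> Dig E M B" using insert.prems(2) unfolding triangular_exchange_def by blast
  then have "base E M ?B" using base_exchange_Dig[OF insert.prems(1)] by blast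
  then have "base E M (exchanged ?B K t h)"
    using insert.IH triangular_exchange_after_max[OF insert.prems insert.hyps(2)] by simp
  then show ?case using eq by simp
qed

lemma triangular_exchange_indep:
  fixes K :: "'k::linorder set"
  assumes B: "base E M B" and T: "triangular_exchange E M B K t h"
  shows "M (exchanged B K t h)"
proof (rule indep_if_finite_subsets_indep)
  show "exchanged B K t h \<subseteq> E"
    using base_subset_ground[OF B] triangular_exchange_arc(1)[OF B T] unfolding exchanged_def by blast
next
  fix F assume F: "F \<subseteq> exchanged B K t h" "finite F"
  obtain K' where K': "K' \<subseteq> K" "finite K'" "F \<inter> t ` K = t ` K'"
    using finite_subset_image[of "F \<inter> t ` K" t K] F(2) by blast
  then have "base E M (exchanged B K' t h)"
    using triangular_exchange_finite_base[OF _ B] triangular_exchange_subset[OF T] by blast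
  moreover have "F \<subseteq> exchanged B K' t h" using F(1) K' unfolding exchanged_def by blast
  ultimately show "M F" using indep_subset base_indep by blast
qed

text \<open>By induction along K: every head other than h k on the circuit of t k has an
  earlier index.\<close>
lemma triangular_exchange_head_spanned:
  fixes K :: "'k::wellorder set"
  assumes B: "base E M B" and T: "triangular_exchange E M B K t h"
    and Y: "M Y" "\<forall>k\<in>K. fcirc E M (t k) B - h ` K \<subseteq> Y"
  shows "k \<in> K \<Longrightarrow> h k \<notin> Y \<Longrightarrow> \<not> M (insert (h k) Y)"
proof (induction k rule: less_induct)
  case (less k)
  let ?C = "fcirc E M (t k) B"
  let ?W = "(?C - Y) - {h k}"
  have C: "circuit E M ?C" "h k \<in> ?C"
    using fcirc_circuit[OF B] triangular_exchange_arc[OF B T less.prems(1)] by blast+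
  have "finite ?W" using circuit_finite[OF C(1)] by blast
  moreover have "?W \<subseteq> E" using circuit_subset_ground[OF C(1)] by blast
  moreover have "\<not> M (insert w Y)" if w: "w \<in> ?W" for w
  proof -
    obtain j where j: "j \<in> K" "w = h j" using w Y(2) less.prems(1) by blast
    then have "\<not> k < j" "j \<noteq> k" using T less.prems(1) w unfolding triangular_exchange_def by auto
    then have "j < k" by simp
    then show ?thesis using less.IH j w by blast
  qed
  moreover have "?C \<subseteq> Y \<union> ?W \<union> {h k}" by blast
  ultimately show ?case
    using dependent_insert_if_circuit_in_span[OF Y(1) _ _ _ C] less.prems(2) by blast
qed

lemma triangular_exchange_base:
  fixes K :: "'k::wellorder set"
  assumes B: "base E M B" and T: "triangular_exchange E M B K t h"
  shows "base E M (exchanged B K t h)"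
proof (rule ccontr)
  let ?B = "exchanged B K t h"
  assume "\<not> base E M ?B"
  then obtain x where x: "x \<in> B - ?B" "M (insert x ?B)"
    using indep_augment[OF triangular_exchange_indep[OF B T] _ B] by blast
  then obtain k where k: "k \<in> K" "x = h k" unfolding exchanged_def by blast
  have "\<forall>k\<in>K. fcirc E M (t k) B - h ` K \<subseteq> ?B"
    using fcirc_subset[OF B] triangular_exchange_arc(1)[OF B T] unfolding exchanged_def by blast
  then have "\<not> M (insert (h k) ?B)"
    using triangular_exchange_head_spanned[OF B T triangular_exchange_indep[OF B T]] k x(1) by blast
  with x k show False by simp
qed

lemma triangular_exchange_in_U:
  assumes B: "base E M B" and T: "triangular_exchange E M B K t h"
    and U: "\<forall>k\<in>K. fcirc E M (t k) B \<subseteq> U"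
  shows "t ` K \<subseteq> U" "h ` K \<subseteq> U"
  using U tail_mem_fcirc[OF B] triangular_exchange_arc[OF B T] by blast+

lemma fcirc_triangular_exchange_if_fcirc:
  fixes K :: "'k::wellorder set"
  assumes B: "base E M B" and T: "triangular_exchange E M B K t h"
    and U: "\<forall>k\<in>K. fcirc E M (t k) B \<subseteq> U"
    and e: "e \<in> E - B" "e \<notin> U" and f: "f \<in> fcirc E M e B" "f \<in> B" "f \<notin> U"
  shows "f \<in> fcirc E M e (exchanged B K t h)"
proof -
  let ?B' = "exchanged B K t h" and ?Bf = "insert e (B - {f})"
  have tU: "t ` K \<subseteq> U" and hU: "h ` K \<subseteq> U" using triangular_exchange_in_U[OF B T U] by blast+
  have ef: "(e, f) \<in> Dig E M B" using Dig_iff[OF B] e f by blast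
  have "e \<notin> h ` K" "f \<notin> t ` K" using e(2) f(3) tU hU by blast+
  then have eq: "exchanged ?Bf K t h = insert e (?B' - {f})" unfolding exchanged_def by auto
  have same: "fcirc E M (t k) ?Bf = fcirc E M (t k) B" if "k \<in> K" for k
  proof -
    have "f \<notin> fcirc E M (t k) B" using U f(3) that by blast
    then show ?thesis
      using fcirc_base_exchange_Dig[OF B ef triangular_exchange_arc(1)[OF B T that]] by blast
  qed
  have "(t k, h k) \<in> Dig E M ?Bf" if "k \<in> K" for k
  proof -
    have "t k \<noteq> e" using tU e(2) that by blast
    moreover have "(t k, h k) \<in> Dig E M B" using T that unfolding triangular_exchange_def by blast
    ultimately show ?thesis using same[OF that] unfolding Dig_def by auto
  qed
  then have "triangular_exchange E M ?Bf K t h"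
    using T same unfolding triangular_exchange_def by auto
  then have "base E M (exchanged ?Bf K t h)"
    using triangular_exchange_base[OF base_exchange_Dig[OF B ef]] by blast
  then have "M (insert e (?B' - {f}))" using eq base_indep by simp
  moreover have "e \<in> E - ?B'" "f \<in> ?B'" using e(1,2) f(2,3) tU hU unfolding exchanged_def by blast+
  ultimately show ?thesis using mem_fcirc_iff[OF triangular_exchange_base[OF B T]] by blast
qed

lemma fcirc_if_fcirc_triangular_exchange:
  fixes K :: "'k::wellorder set"
  assumes B: "base E M B" and T: "triangular_exchange E M B K t h"
    and U: "\<forall>k\<in>K. fcirc E M (t k) B \<subseteq> U"
    and e: "e \<in> E - B" "e \<notin> U" and f: "f \<in> fcirc E M e (exchanged B K t h)" "f \<in> B" "f \<notin> U"
  shows "f \<in> fcirc E M e B"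
proof (rule ccontr)
  assume f_notin: "f \<notin> fcirc E M e B"
  let ?B' = "exchanged B K t h"
  let ?Y = "?B' - {f}" and ?W = "fcirc E M e B \<inter> h ` K"
  have B': "base E M ?B'" using triangular_exchange_base[OF B T] .
  have tU: "t ` K \<subseteq> U" and hU: "h ` K \<subseteq> U" using triangular_exchange_in_U[OF B T U] by blast+
  have e': "e \<in> E - ?B'" and "f \<in> ?B'"
    using e(1,2) f(2,3) tU hU unfolding exchanged_def by blast+
  have Y: "M ?Y" using indep_subset[OF base_indep[OF B']] by blast
  have C: "circuit E M (fcirc E M e B)" using fcirc_circuit[OF B e(1)] .
  have "fcirc E M (t k) B - h ` K \<subseteq> ?Y" if "k \<in> K" for k
  proof -
    have "f \<notin> fcirc E M (t k) B" using U f(3) that by blast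
    then show ?thesis
      using fcirc_subset[OF B triangular_exchange_arc(1)[OF B T that]] that
      unfolding exchanged_def by blast
  qed
  then have "\<forall>w\<in>?W. \<not> M (insert w ?Y)"
    using triangular_exchange_head_spanned[OF B T Y] unfolding exchanged_def by blast
  moreover have "finite ?W" "?W \<subseteq> E" using circuit_finite[OF C] circuit_subset_ground[OF C] by blast+
  moreover have "fcirc E M e B \<subseteq> ?Y \<union> ?W \<union> {e}"
    using fcirc_subset[OF B e(1)] f_notin unfolding exchanged_def by blast
  moreover have "e \<notin> ?Y" using e' by blast
  ultimately have "\<not> M (insert e ?Y)"
    using dependent_insert_if_circuit_in_span[OF Y _ _ _ C tail_mem_fcirc[OF B e(1)]] by blast
  then show False using mem_fcirc_iff[OF B' e' \<open>f \<in> ?B'\<close>] f(1) by blast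
qed

lemma triangular_exchange_induced_Dig:
  fixes K :: "'k::wellorder set"
  assumes B: "base E M B" and T: "triangular_exchange E M B K t h"
    and U: "\<forall>k\<in>K. fcirc E M (t k) B \<subseteq> U"
  shows "induced (Dig E M (exchanged B K t h)) (E - U) = induced (Dig E M B) (E - U)"
proof -
  let ?B' = "exchanged B K t h"
  have B': "base E M ?B'" using triangular_exchange_base[OF B T] .
  have tU: "t ` K \<subseteq> U" and hU: "h ` K \<subseteq> U" using triangular_exchange_in_U[OF B T U] by blast+
  have same: "x \<in> ?B' \<longleftrightarrow> x \<in> B" if "x \<notin> U" for x
    using that tU hU unfolding exchanged_def by blast
  have "(e, f) \<in> Dig E M ?B' \<longleftrightarrow> (e, f) \<in> Dig E M B" if ef: "e \<in> E - U" "f \<in> E - U" for e f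
  proof (cases "e \<in> E - B \<and> f \<in> B")
    case True
    then have "f \<in> fcirc E M e ?B' \<longleftrightarrow> f \<in> fcirc E M e B"
      using ef fcirc_triangular_exchange_if_fcirc[OF B T U] fcirc_if_fcirc_triangular_exchange[OF B T U]
      by blast
    then show ?thesis using True ef same[of e] same[of f] Dig_iff[OF B] Dig_iff[OF B'] by blast
  next
    case False
    then show ?thesis using ef same[of e] same[of f] Dig_iff[OF B] Dig_iff[OF B'] by blast
  qed
  then show ?thesis unfolding induced_def by blast
qed

end

lemma mem_arcs_iff: "(e, f) \<in> arcs p \<longleftrightarrow> (\<exists>i. Suc i < length p \<and> e = p ! i \<and> f = p ! Suc i)"
  unfolding arcs_def by blast

lemma nth_arc_distinct:
  assumes "distinct p" "(p ! i, p ! Suc j) \<in> arcs p" "i < length p" "Suc j < length p"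
  shows "i = j"
proof -
  obtain l where l: "Suc l < length p" "p ! i = p ! l" "p ! Suc j = p ! Suc l"
    using assms(2) unfolding mem_arcs_iff by blast
  then have "i = l" "Suc j = Suc l" using assms(1,3,4) nth_eq_iff_index_eq by (metis Suc_lessD)+
  then show ?thesis by simp
qed

lemma arcs_rev_subset: "arcs (rev p) \<subseteq> (arcs p)\<inverse>"
proof
  fix a assume "a \<in> arcs (rev p)"
  then obtain i where i: "Suc i < length p" "a = (rev p ! i, rev p ! Suc i)"
    unfolding arcs_def by auto
  define j where "j = length p - Suc (Suc i)"
  have "Suc j = length p - Suc i" "Suc j < length p" using i(1) unfolding j_def by auto
  then have "a = (p ! Suc j, p ! j)" using i by (simp add: rev_nth j_def)
  with \<open>Suc j < length p\<close> show "a \<in> (arcs p)\<inverse>" unfolding arcs_def by blast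
qed

lemma arcs_rev: "arcs (rev p) = (arcs p)\<inverse>"
  using arcs_rev_subset[of p] arcs_rev_subset[of "rev p"] by auto

lemma shortcut_rev: "shortcut D (rev p) (e, f) \<Longrightarrow> shortcut (D\<inverse>) p (f, e)"
proof -
  assume "shortcut D (rev p) (e, f)"
  then obtain i j where ij: "(e, f) \<in> D" "(e, f) \<notin> arcs (rev p)" "i < j" "j < length p"
    "e = rev p ! i" "f = rev p ! j"
    unfolding shortcut_def by auto
  then have "f = p ! (length p - Suc j)" "e = p ! (length p - Suc i)"
    "length p - Suc j < length p - Suc i" "length p - Suc i < length p"
    by (simp_all add: rev_nth)
  with ij(1,2) show ?thesis unfolding shortcut_def arcs_rev by blast
qed

lemma shortcut_mono: "D \<subseteq> D' \<Longrightarrow> shortcut D p a \<Longrightarrow> shortcut D' p a"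
  unfolding shortcut_def by blast

context fin_matroid
begin

lemma head_notin_fcirc_if_no_shortcut:
  assumes B: "base E M B" and p: "distinct p" "\<forall>a. \<not> shortcut (Dig E M B) p a"
    and arc: "(p ! i, p ! Suc i) \<in> Dig E M B" and ij: "i < j" "Suc j < length p"
  shows "p ! Suc j \<notin> fcirc E M (p ! i) B"
proof
  assume in_fcirc: "p ! Suc j \<in> fcirc E M (p ! i) B"
  have "p ! Suc j \<noteq> p ! i" using p(1) ij nth_eq_iff_index_eq by fastforce
  then have "(p ! i, p ! Suc j) \<in> Dig E M B" using arc in_fcirc unfolding Dig_def by blast
  moreover have "(p ! i, p ! Suc j) \<notin> arcs p" using nth_arc_distinct[OF p(1)] ij by fastforce
  ultimately have "shortcut (Dig E M B) p (p ! i, p ! Suc j)"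
    using ij unfolding shortcut_def by (metis less_SucI)
  with p(2) show False by blast
qed

lemma paths_triangular_exchange:
  fixes P :: "'i::wellorder \<Rightarrow> 'a list"
  assumes B: "base E M B"
    and paths: "\<forall>\<alpha><xi. distinct (P \<alpha>) \<and> (\<forall>a. \<not> shortcut (Dig E M B) (P \<alpha>) a)"
    and disj: "\<forall>\<alpha><xi. \<forall>\<beta><\<alpha>. \<forall>e f. (e, f) \<in> arcs (P \<beta>) \<inter> Dig E M B
                 \<longrightarrow> set (P \<alpha>) \<inter> fcirc E M e B = {}"
  shows "triangular_exchange E M B
           {(\<alpha>, i). \<alpha> < xi \<and> Suc i < length (P \<alpha>) \<and> (P \<alpha> ! i, P \<alpha> ! Suc i) \<in> Dig E M B}
           (\<lambda>(\<alpha>, i). P \<alpha> ! i) (\<lambda>(\<alpha>, i). P \<alpha> ! Suc i)"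
    (is "triangular_exchange E M B ?K ?t ?h")
  unfolding triangular_exchange_def
proof (intro conjI ballI impI)
  show "(?t k, ?h k) \<in> Dig E M B" if "k \<in> ?K" for k using that by auto
next
  fix k k' assume "k \<in> ?K" "k' \<in> ?K" "k < k'"
  then obtain \<alpha> i \<beta> j where k: "k = (\<alpha>, i)" "k' = (\<beta>, j)"
    and a: "\<alpha> < xi" "Suc i < length (P \<alpha>)" "(P \<alpha> ! i, P \<alpha> ! Suc i) \<in> Dig E M B"
    and b: "\<beta> < xi" "Suc j < length (P \<beta>)" and less: "(\<alpha>, i) < (\<beta>, j)"
    by auto
  show "?h k' \<notin> fcirc E M (?t k) B"
  proof
    assume "?h k' \<in> fcirc E M (?t k) B"
    then have in_fcirc: "P \<beta> ! Suc j \<in> fcirc E M (P \<alpha> ! i) B" using k by simp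
    consider "\<alpha> < \<beta>" | "\<alpha> = \<beta>" "i < j" using less order_le_less by auto
    then show False
    proof cases
      case 1
      have "(P \<alpha> ! i, P \<alpha> ! Suc i) \<in> arcs (P \<alpha>)" using a(2) unfolding mem_arcs_iff by blast
      then show False using disj b(1) a(3) 1 in_fcirc nth_mem[OF b(2)] by blast
    next
      case 2
      then show False
        using head_notin_fcirc_if_no_shortcut[OF B _ _ a(3)] paths a(1) b(2) in_fcirc by blast
    qed
  qed
qed

lemma paths_exchange_base_induced:
  fixes P :: "'i::wellorder \<Rightarrow> 'a list"
  assumes B: "base E M B"
    and paths: "\<forall>\<alpha><xi. distinct (P \<alpha>) \<and> (\<forall>a. \<not> shortcut (Dig E M B) (P \<alpha>) a)"
    and disj: "\<forall>\<alpha><xi. \<forall>\<beta><\<alpha>. \<forall>e f. (e, f) \<in> arcs (P \<beta>) \<inter> Dig E M B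
                 \<longrightarrow> set (P \<alpha>) \<inter> fcirc E M e B = {}"
    and U: "\<forall>\<alpha><xi. \<forall>e f. (e, f) \<in> arcs (P \<alpha>) \<inter> Dig E M B \<longrightarrow> fcirc E M e B \<subseteq> U"
  defines "A \<equiv> \<Union>\<alpha>\<in>{..<xi}. arcs (P \<alpha>)"
  defines "B' \<equiv> (B \<union> {e. \<exists>f. (e, f) \<in> A \<inter> Dig E M B}) - {f. \<exists>e. (e, f) \<in> A \<inter> Dig E M B}"
  shows "base E M B' \<and> induced (Dig E M B') (E - U) = induced (Dig E M B) (E - U)"
proof -
  define K where
    "K = {(\<alpha>, i). \<alpha> < xi \<and> Suc i < length (P \<alpha>) \<and> (P \<alpha> ! i, P \<alpha> ! Suc i) \<in> Dig E M B}"
  define t where "t = (\<lambda>(\<alpha>, i). P \<alpha> ! i)"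
  define h where "h = (\<lambda>(\<alpha>, i). P \<alpha> ! Suc i)"
  have T: "triangular_exchange E M B K t h"
    using paths_triangular_exchange[OF B paths disj] unfolding K_def t_def h_def .
  have arc: "(e, f) \<in> A \<inter> Dig E M B \<longleftrightarrow> (\<exists>k\<in>K. e = t k \<and> f = h k)" for e f
    by (auto simp: A_def K_def t_def h_def mem_arcs_iff)
  then have "B' = exchanged B K t h" unfolding B'_def exchanged_def by blast
  moreover have "\<forall>k\<in>K. fcirc E M (t k) B \<subseteq> U" using U arc unfolding A_def by blast
  ultimately show ?thesis
    using triangular_exchange_base[OF B T] triangular_exchange_induced_Dig[OF B T] by simp
qed

lemma paths_exchange_base_induced_converse:
  fixes P :: "'i::wellorder \<Rightarrow> 'a list"
  assumes B: "base E M B"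
    and paths: "\<forall>\<alpha><xi. distinct (P \<alpha>) \<and> (\<forall>a. \<not> shortcut ((Dig E M B)\<inverse>) (P \<alpha>) a)"
    and disj: "\<forall>\<alpha><xi. \<forall>\<beta><\<alpha>. \<forall>e f. (e, f) \<in> arcs (P \<beta>) \<inter> (Dig E M B)\<inverse>
                 \<longrightarrow> set (P \<alpha>) \<inter> fcirc E M f B = {}"
    and U: "\<forall>\<alpha><xi. \<forall>e f. (e, f) \<in> arcs (P \<alpha>) \<inter> (Dig E M B)\<inverse> \<longrightarrow> fcirc E M f B \<subseteq> U"
  defines "A \<equiv> \<Union>\<alpha>\<in>{..<xi}. arcs (P \<alpha>)"
  defines "B' \<equiv> (B \<union> {f. \<exists>e. (e, f) \<in> A \<inter> (Dig E M B)\<inverse>}) - {e. \<exists>f. (e, f) \<in> A \<inter> (Dig E M B)\<inverse>}"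
  shows "base E M B' \<and> induced (Dig E M B') (E - U) = induced (Dig E M B) (E - U)"
proof -
  have "(\<Union>\<alpha>\<in>{..<xi}. arcs (rev (P \<alpha>))) = A\<inverse>" unfolding A_def arcs_rev by blast
  then have "B' = (B \<union> {e. \<exists>f. (e, f) \<in> (\<Union>\<alpha>\<in>{..<xi}. arcs (rev (P \<alpha>))) \<inter> Dig E M B})
                 - {f. \<exists>e. (e, f) \<in> (\<Union>\<alpha>\<in>{..<xi}. arcs (rev (P \<alpha>))) \<inter> Dig E M B}"
    unfolding B'_def by blast
  moreover have "base E M \<dots> \<and> induced (Dig E M \<dots>) (E - U) = induced (Dig E M B) (E - U)"
  proof (rule paths_exchange_base_induced[OF B])
    show "\<forall>\<alpha><xi. distinct (rev (P \<alpha>)) \<and> (\<forall>a. \<not> shortcut (Dig E M B) (rev (P \<alpha>)) a)"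
      using paths shortcut_rev by fastforce
    show "\<forall>\<alpha><xi. \<forall>\<beta><\<alpha>. \<forall>e f. (e, f) \<in> arcs (rev (P \<beta>)) \<inter> Dig E M B
            \<longrightarrow> set (rev (P \<alpha>)) \<inter> fcirc E M e B = {}"
      using disj unfolding arcs_rev by auto
    show "\<forall>\<alpha><xi. \<forall>e f. (e, f) \<in> arcs (rev (P \<alpha>)) \<inter> Dig E M B \<longrightarrow> fcirc E M e B \<subseteq> U"
      using U unfolding arcs_rev by auto
  qed
  ultimately show ?thesis by simp
qed

end

theorem lemma3p7:
  fixes E :: "'a set" and M N :: "'a set \<Rightarrow> bool" and BM BN :: "'a set"
    and P :: "'i::wellorder \<Rightarrow> 'a list" and xi :: "'i"
  assumes "finitary_matroid E M" and "finitary_matroid E N"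
    and "base E M BM" and "base E N BN"
    and paths: "\<forall>\<alpha><xi. is_path (Db E M N BM BN) (P \<alpha>)
                   \<and> (\<forall>a. \<not> shortcut (Db E M N BM BN) (P \<alpha>) a)"
    and disj: "\<forall>\<alpha><xi. \<forall>\<beta><\<alpha>. \<forall>a\<in>arcs (P \<beta>). \<forall>C\<in>escorts E M N BM BN a.
                   set (P \<alpha>) \<inter> C = {}"
  defines "BMxi \<equiv> (BM \<union> {e. \<exists>f. (e,f) \<in> (\<Union>\<alpha>\<in>{..<xi}. arcs (P \<alpha>)) \<inter> Dig E M BM})
                  - {f. \<exists>e. (e,f) \<in> (\<Union>\<alpha>\<in>{..<xi}. arcs (P \<alpha>)) \<inter> Dig E M BM}"
    and "BNxi \<equiv> (BN \<union> {f. \<exists>e. (e,f) \<in> (\<Union>\<alpha>\<in>{..<xi}. arcs (P \<alpha>)) \<inter> (Dig E N BN)\<inverse>})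
                  - {e. \<exists>f. (e,f) \<in> (\<Union>\<alpha>\<in>{..<xi}. arcs (P \<alpha>)) \<inter> (Dig E N BN)\<inverse>}"
    and "U \<equiv> (\<Union>\<alpha>\<in>{..<xi}. \<Union>a\<in>arcs (P \<alpha>). \<Union>(escorts E M N BM BN a))"
  shows "base E M BMxi \<and> base E N BNxi
         \<and> induced (Dig E M BMxi) (E - U) = induced (Dig E M BM) (E - U)
         \<and> induced (Dig E N BNxi) (E - U) = induced (Dig E N BN) (E - U)"
proof -
  interpret M: fin_matroid E M using assms(1) by unfold_locales
  interpret N: fin_matroid E N using assms(2) by unfold_locales
  have Db: "Dig E M BM \<subseteq> Db E M N BM BN" "(Dig E N BN)\<inverse> \<subseteq> Db E M N BM BN"
    unfolding Db_def by blast+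
  have escort_M: "fcirc E M e BM \<in> escorts E M N BM BN (e, f)" if "(e, f) \<in> Dig E M BM" for e f
    using that unfolding escorts_def by auto
  have escort_N: "fcirc E N f BN \<in> escorts E M N BM BN (e, f)" if "(e, f) \<in> (Dig E N BN)\<inverse>" for e f
    using that unfolding escorts_def by auto
  have dist: "\<forall>\<alpha><xi. distinct (P \<alpha>)" using paths unfolding is_path_def by blast
  have "base E M BMxi \<and> induced (Dig E M BMxi) (E - U) = induced (Dig E M BM) (E - U)"
    unfolding BMxi_def
  proof (rule M.paths_exchange_base_induced[OF assms(3)])
    show "\<forall>\<alpha><xi. distinct (P \<alpha>) \<and> (\<forall>a. \<not> shortcut (Dig E M BM) (P \<alpha>) a)"
      using dist paths shortcut_mono[OF Db(1)] by blast
    show "\<forall>\<alpha><xi. \<forall>\<beta><\<alpha>. \<forall>e f. (e, f) \<in> arcs (P \<beta>) \<inter> Dig E M BM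
            \<longrightarrow> set (P \<alpha>) \<inter> fcirc E M e BM = {}"
      using disj escort_M by blast
    show "\<forall>\<alpha><xi. \<forall>e f. (e, f) \<in> arcs (P \<alpha>) \<inter> Dig E M BM \<longrightarrow> fcirc E M e BM \<subseteq> U"
      unfolding U_def using escort_M by blast
  qed
  moreover have "base E N BNxi \<and> induced (Dig E N BNxi) (E - U) = induced (Dig E N BN) (E - U)"
    unfolding BNxi_def
  proof (rule N.paths_exchange_base_induced_converse[OF assms(4)])
    show "\<forall>\<alpha><xi. distinct (P \<alpha>) \<and> (\<forall>a. \<not> shortcut ((Dig E N BN)\<inverse>) (P \<alpha>) a)"
      using dist paths shortcut_mono[OF Db(2)] by blast
    show "\<forall>\<alpha><xi. \<forall>\<beta><\<alpha>. \<forall>e f. (e, f) \<in> arcs (P \<beta>) \<inter> (Dig E N BN)\<inverse>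
            \<longrightarrow> set (P \<alpha>) \<inter> fcirc E N f BN = {}"
      using disj escort_N by blast
    show "\<forall>\<alpha><xi. \<forall>e f. (e, f) \<in> arcs (P \<alpha>) \<inter> (Dig E N BN)\<inverse> \<longrightarrow> fcirc E N f BN \<subseteq> U"
      unfolding U_def using escort_N by blast
  qed
  ultimately show ?thesis by blast
qed

end
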